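(* The variety $\mathsf{V}(S_{(4,431)})$ is the ai-semiring variety defined by the identities $x^2y\approx xy$, $xy\approx yx$, $x^2\approx x^2+x$, $x+yz\approx x+yz+xyz$.
   Context: An ai-semiring is an algebra $(S,+,\cdot)$ with $(S,+)$ a semilattice, $(S,\cdot)$ a semigroup, and both distributive laws. $\mathsf{V}(S)$ is the variety generated by $S$; "the ai-semiring variety defined by identities $\Sigma$" is the class of all ai-semirings satisfying $\Sigma$. $S_{(4,431)}$ has carrier $\{1,2,3,4\}$; addition: $x+x=x$, $2+x=x$, $1+x=1$ for all $x$, $3+4=1$; multiplication (row $a$, column $b$ gives $a\cdot b$): row $1$: $1,2,1,1$; row $2$: $2,2,2,2$; row $3$: $1,2,1,1$; row $4$: $1,2,1,4$. *)

theory Defs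
  imports Main
begin

datatype trm = V nat | Pl trm trm (infixl "\<oplus>" 65) | Tm trm trm (infixl "\<odot>" 70)

fun eval :: "('a \<Rightarrow> 'a \<Rightarrow> 'a) \<Rightarrow> ('a \<Rightarrow> 'a \<Rightarrow> 'a) \<Rightarrow> (nat \<Rightarrow> 'a) \<Rightarrow> trm \<Rightarrow> 'a" where
  "eval ad mu \<nu> (V n) = \<nu> n"
| "eval ad mu \<nu> (Pl s t) = ad (eval ad mu \<nu> s) (eval ad mu \<nu> t)"
| "eval ad mu \<nu> (Tm s t) = mu (eval ad mu \<nu> s) (eval ad mu \<nu> t)"

definition satisfies :: "('a \<Rightarrow> 'a \<Rightarrow> 'a) \<Rightarrow> ('a \<Rightarrow> 'a \<Rightarrow> 'a) \<Rightarrow> trm \<Rightarrow> trm \<Rightarrow> bool" where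
  "satisfies ad mu s t \<longleftrightarrow> (\<forall>\<nu>. eval ad mu \<nu> s = eval ad mu \<nu> t)"

definition ai_semiring :: "('a \<Rightarrow> 'a \<Rightarrow> 'a) \<Rightarrow> ('a \<Rightarrow> 'a \<Rightarrow> 'a) \<Rightarrow> bool" where
  "ai_semiring ad mu \<longleftrightarrow>
     (\<forall>x y z. ad (ad x y) z = ad x (ad y z)) \<and>
     (\<forall>x y. ad x y = ad y x) \<and>
     (\<forall>x. ad x x = x) \<and>
     (\<forall>x y z. mu (mu x y) z = mu x (mu y z)) \<and>
     (\<forall>x y z. mu x (ad y z) = ad (mu x y) (mu x z)) \<and>
     (\<forall>x y z. mu (ad x y) z = ad (mu x z) (mu y z))"

text \<open>The four-element ai-semiring S_(4,431), elements e1..e4 standing for 1..4.\<close>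
datatype s4 = e1 | e2 | e3 | e4

fun s4_add :: "s4 \<Rightarrow> s4 \<Rightarrow> s4" where
  "s4_add e1 _ = e1"
| "s4_add _ e1 = e1"
| "s4_add e2 y = y"
| "s4_add x e2 = x"
| "s4_add e3 e3 = e3"
| "s4_add e4 e4 = e4"
| "s4_add e3 e4 = e1"
| "s4_add e4 e3 = e1"

fun s4_mul :: "s4 \<Rightarrow> s4 \<Rightarrow> s4" where
  "s4_mul e2 _ = e2"
| "s4_mul _ e2 = e2"
| "s4_mul e4 e4 = e4"
| "s4_mul _ _ = e1"

text \<open>A is in the variety V(S) generated by S iff A satisfies every identity of S
  (Birkhoff: V(S) = HSP(S) = Mod(Id(S))).\<close>
definition in_V_S4 :: "('a \<Rightarrow> 'a \<Rightarrow> 'a) \<Rightarrow> ('a \<Rightarrow> 'a \<Rightarrow> 'a) \<Rightarrow> bool" where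
  "in_V_S4 ad mu \<longleftrightarrow> (\<forall>s t. satisfies s4_add s4_mul s t \<longrightarrow> satisfies ad mu s t)"

end

theory Submission
  imports Defs
begin

text \<open>
  In every ai-semiring a term equals a nonempty sum of words, its normal form \<open>nf\<close>.
  In S(4,431) a word is 2 as soon as one letter is 2, is 4 iff all letters are 4, and is never 3
  unless it is a single letter. Valuations into \<open>{1, 2, 4}\<close> and \<open>{2, 3}\<close> therefore show: if
  S(4,431) satisfies \<open>u \<approx> v\<close>, then every word \<open>w\<close> of \<open>v\<close> is covered by \<open>u\<close>, i.e. each letter
  of \<open>w\<close> occurs in a word of \<open>u\<close> whose letters all occur in \<open>w\<close>, and if \<open>w\<close> has length at
  least 2, so does one such word.

  Conversely, order a model of the four identities by \<open>x \<preceq> y \<longleftrightarrow> x + y = y\<close>. By \<open>x\<^sup>2y \<approx> xy\<close> and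
  commutativity a word of length at least 2 depends only on its set of letters; \<open>x\<^sup>2 \<approx> x\<^sup>2 + x\<close>
  says \<open>x \<preceq> x\<^sup>2\<close>, and the last identity says \<open>xyz \<preceq> x + yz\<close>, so a word of length at least 2
  below \<open>u\<close> times another word below \<open>u\<close> stays below \<open>u\<close>. Multiplying covering words of \<open>u\<close>
  together thus puts every word of \<open>v\<close> below \<open>u\<close>, so \<open>v \<preceq> u\<close>, and by symmetry \<open>u = v\<close>.
\<close>

section \<open>Folding nonempty lists\<close>

fun fold1 :: "('a \<Rightarrow> 'a \<Rightarrow> 'a) \<Rightarrow> 'a list \<Rightarrow> 'a" where
  "fold1 f [] = undefined"
| "fold1 f [x] = x"
| "fold1 f (x # y # zs) = f x (fold1 f (y # zs))"

lemma fold1_Cons: "xs \<noteq> [] \<Longrightarrow> fold1 f (x # xs) = f x (fold1 f xs)"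
  by (cases xs) auto

lemma fold1_append:
  assumes assoc: "\<And>x y z. f (f x y) z = f x (f y z)" and "xs \<noteq> []" "ys \<noteq> []"
  shows "fold1 f (xs @ ys) = f (fold1 f xs) (fold1 f ys)"
  using \<open>xs \<noteq> []\<close>
proof (induction xs)
  case (Cons x xs)
  then show ?case
    by (cases "xs = []") (simp_all add: fold1_Cons \<open>ys \<noteq> []\<close> assoc)
qed simp

lemma fold1_concat:
  assumes "\<And>x y z. f (f x y) z = f x (f y z)" and "xss \<noteq> []" "[] \<notin> set xss"
  shows "fold1 f (concat xss) = fold1 f (map (fold1 f) xss)"
  using assms(2,3)
proof (induction xss)
  case (Cons xs xss)
  show ?case
  proof (cases "xss = []")
    case False
    have "concat xss \<noteq> []" "xs \<noteq> []" using False Cons.prems(2) by (cases xss; auto)+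
    with False Cons show ?thesis
      by (simp add: fold1_Cons fold1_append[OF assms(1)])
  qed simp
qed simp

lemma fold1_map_hom:
  assumes "\<And>x y. h (f x y) = f (h x) (h y)" and "xs \<noteq> []"
  shows "fold1 f (map h xs) = h (fold1 f xs)"
  using assms(2)
proof (induction xs)
  case (Cons x xs)
  then show ?case
    by (cases "xs = []") (simp_all add: fold1_Cons assms(1))
qed simp

lemma fold1_in_iff:
  assumes "\<And>x y. f x y \<in> A \<longleftrightarrow> x \<in> A \<and> y \<in> A" and "xs \<noteq> []"
  shows "fold1 f xs \<in> A \<longleftrightarrow> set xs \<subseteq> A"
  using assms(2)
proof (induction xs)
  case (Cons x xs)
  then show ?case
    by (cases "xs = []") (simp_all add: fold1_Cons assms(1))
qed simp

lemma fold1_remove1: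
  assumes assoc: "\<And>x y z. f (f x y) z = f x (f y z)" and commute: "\<And>x y. f x y = f y x"
    and "x \<in> set xs" "remove1 x xs \<noteq> []"
  shows "fold1 f xs = f x (fold1 f (remove1 x xs))"
  using assms(3,4)
proof (induction xs)
  case (Cons y xs)
  show ?case
  proof (cases "x = y")
    case True
    with Cons.prems show ?thesis by (simp add: fold1_Cons)
  next
    case False
    with Cons.prems(1) have "x \<in> set xs" by simp
    show ?thesis
    proof (cases "remove1 x xs = []")
      case True
      with \<open>x \<in> set xs\<close> have "xs = [x]" by (cases xs) (auto split: if_splits)
      with \<open>x \<noteq> y\<close> show ?thesis by (simp add: commute)
    next
      case False
      have "fold1 f (y # xs) = f y (f x (fold1 f (remove1 x xs)))"
        using Cons.IH \<open>x \<in> set xs\<close> False fold1_Cons[of xs f y] by force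
      also have "\<dots> = f x (f y (fold1 f (remove1 x xs)))"
        by (metis assoc commute)
      finally show ?thesis using \<open>x \<noteq> y\<close> False by (simp add: fold1_Cons)
    qed
  qed
qed simp

section \<open>Normal forms of ai-semiring terms\<close>

definition eval_word :: "('a \<Rightarrow> 'a \<Rightarrow> 'a) \<Rightarrow> (nat \<Rightarrow> 'a) \<Rightarrow> nat list \<Rightarrow> 'a" where
  "eval_word mu \<nu> w = fold1 mu (map \<nu> w)"

definition eval_poly ::
    "('a \<Rightarrow> 'a \<Rightarrow> 'a) \<Rightarrow> ('a \<Rightarrow> 'a \<Rightarrow> 'a) \<Rightarrow> (nat \<Rightarrow> 'a) \<Rightarrow> nat list list \<Rightarrow> 'a" where
  "eval_poly ad mu \<nu> P = fold1 ad (map (eval_word mu \<nu>) P)"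

definition polynomial :: "nat list list \<Rightarrow> bool" where
  "polynomial P \<longleftrightarrow> P \<noteq> [] \<and> [] \<notin> set P"

fun nf :: "trm \<Rightarrow> nat list list" where
  "nf (V n) = [[n]]"
| "nf (Pl s t) = nf s @ nf t"
| "nf (Tm s t) = [a @ b. a \<leftarrow> nf s, b \<leftarrow> nf t]"

lemma polynomial_word_nonempty: "polynomial P \<Longrightarrow> p \<in> set P \<Longrightarrow> p \<noteq> []"
  unfolding polynomial_def by blast

lemma polynomial_nf: "polynomial (nf s)"
  by (induction s) (auto simp: polynomial_def)

lemma ai_semiringD:
  assumes "ai_semiring ad mu"
  shows "ad (ad x y) z = ad x (ad y z)" "ad x y = ad y x" "ad x x = x"
    "mu (mu x y) z = mu x (mu y z)"
    "mu x (ad y z) = ad (mu x y) (mu x z)" "mu (ad x y) z = ad (mu x z) (mu y z)"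
  using assms unfolding ai_semiring_def by blast+

lemma eval_word_singleton [simp]: "eval_word mu \<nu> [x] = \<nu> x"
  by (simp add: eval_word_def)

lemma eval_word_append:
  assumes "ai_semiring ad mu" "a \<noteq> []" "b \<noteq> []"
  shows "eval_word mu \<nu> (a @ b) = mu (eval_word mu \<nu> a) (eval_word mu \<nu> b)"
  using assms(2,3) by (simp add: eval_word_def fold1_append ai_semiringD(4)[OF assms(1)])

lemma eval_poly_append:
  assumes "ai_semiring ad mu" "P \<noteq> []" "Q \<noteq> []"
  shows "eval_poly ad mu \<nu> (P @ Q) = ad (eval_poly ad mu \<nu> P) (eval_poly ad mu \<nu> Q)"
  using assms(2,3) by (simp add: eval_poly_def fold1_append ai_semiringD(1)[OF assms(1)])

lemma eval_poly_times:
  assumes ai: "ai_semiring ad mu" and P: "polynomial P" and Q: "polynomial Q"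
  shows "eval_poly ad mu \<nu> [a @ b. a \<leftarrow> P, b \<leftarrow> Q] = mu (eval_poly ad mu \<nu> P) (eval_poly ad mu \<nu> Q)"
proof -
  have row: "eval_poly ad mu \<nu> [a @ b. b \<leftarrow> Q] = mu (eval_word mu \<nu> a) (eval_poly ad mu \<nu> Q)"
    if "a \<in> set P" for a
  proof -
    have "eval_poly ad mu \<nu> [a @ b. b \<leftarrow> Q]
        = fold1 ad (map (mu (eval_word mu \<nu> a)) (map (eval_word mu \<nu>) Q))"
      unfolding eval_poly_def map_map
    proof (rule arg_cong[where f = "fold1 ad"], rule map_cong[OF refl])
      fix b assume "b \<in> set Q"
      then show "(eval_word mu \<nu> \<circ> (@) a) b = (mu (eval_word mu \<nu> a) \<circ> eval_word mu \<nu>) b"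
        using that P Q eval_word_append[OF ai] unfolding polynomial_def by (metis comp_apply)
    qed
    also have "\<dots> = mu (eval_word mu \<nu> a) (eval_poly ad mu \<nu> Q)"
      unfolding eval_poly_def
      by (rule fold1_map_hom) (use Q ai_semiringD(5)[OF ai] in \<open>auto simp: polynomial_def\<close>)
    finally show ?thesis .
  qed
  have "eval_poly ad mu \<nu> [a @ b. a \<leftarrow> P, b \<leftarrow> Q]
      = fold1 ad (map (\<lambda>a. eval_poly ad mu \<nu> [a @ b. b \<leftarrow> Q]) P)"
    using P Q fold1_concat[OF ai_semiringD(1)[OF ai], of "map (\<lambda>a. map (\<lambda>b. eval_word mu \<nu> (a @ b)) Q) P"]
    by (auto simp: eval_poly_def polynomial_def map_concat comp_def)
  also have "\<dots> = fold1 ad (map (\<lambda>x. mu x (eval_poly ad mu \<nu> Q)) (map (eval_word mu \<nu>) P))"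
    unfolding map_map using row by (simp cong: map_cong)
  also have "\<dots> = mu (eval_poly ad mu \<nu> P) (eval_poly ad mu \<nu> Q)"
    unfolding eval_poly_def
    by (rule fold1_map_hom) (use P ai_semiringD(6)[OF ai] in \<open>auto simp: polynomial_def\<close>)
  finally show ?thesis .
qed

lemma eval_nf:
  assumes "ai_semiring ad mu"
  shows "eval ad mu \<nu> s = eval_poly ad mu \<nu> (nf s)"
proof (induction s)
  case (Pl s t)
  then show ?case
    using polynomial_nf eval_poly_append[OF assms] by (simp add: polynomial_def)
next
  case (Tm s t)
  then show ?case
    using polynomial_nf eval_poly_times[OF assms] by simp
qed (simp add: eval_poly_def)

section \<open>The semiring S(4,431)\<close>

lemma s4_forall_iff: "(\<forall>x. P x) \<longleftrightarrow> P e1 \<and> P e2 \<and> P e3 \<and> P e4"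
  by (metis s4.exhaust)

lemma s4_ai_semiring: "ai_semiring s4_add s4_mul"
  unfolding ai_semiring_def s4_forall_iff by simp

lemma s4_mul_eq_e2_iff: "s4_mul x y = e2 \<longleftrightarrow> x = e2 \<or> y = e2"
  by (cases x; cases y) simp_all

lemma s4_mul_eq_e4_iff: "s4_mul x y = e4 \<longleftrightarrow> x = e4 \<and> y = e4"
  by (cases x; cases y) simp_all

lemma s4_mul_neq_e3: "s4_mul x y \<noteq> e3"
  by (cases x; cases y) simp_all

lemma s4_add_in_e2_e4_iff: "s4_add x y \<in> {e2, e4} \<longleftrightarrow> x \<in> {e2, e4} \<and> y \<in> {e2, e4}"
  by (cases x; cases y) simp_all

lemma s4_add_in_e2_e3_iff: "s4_add x y \<in> {e2, e3} \<longleftrightarrow> x \<in> {e2, e3} \<and> y \<in> {e2, e3}"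
  by (cases x; cases y) simp_all

lemma s4_word_eq_e2_iff:
  assumes "w \<noteq> []"
  shows "eval_word s4_mul \<nu> w = e2 \<longleftrightarrow> (\<exists>x\<in>set w. \<nu> x = e2)"
proof -
  have "s4_mul x y \<in> - {e2} \<longleftrightarrow> x \<in> - {e2} \<and> y \<in> - {e2}" for x y
    by (simp add: s4_mul_eq_e2_iff)
  from fold1_in_iff[OF this, of "map \<nu> w"] show ?thesis
    using assms unfolding eval_word_def by force
qed

lemma s4_word_eq_e4_iff:
  assumes "w \<noteq> []"
  shows "eval_word s4_mul \<nu> w = e4 \<longleftrightarrow> (\<forall>x\<in>set w. \<nu> x = e4)"
proof -
  have "s4_mul x y \<in> {e4} \<longleftrightarrow> x \<in> {e4} \<and> y \<in> {e4}" for x y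
    by (simp add: s4_mul_eq_e4_iff)
  from fold1_in_iff[OF this, of "map \<nu> w"] show ?thesis
    using assms unfolding eval_word_def by auto
qed

lemma s4_word_neq_e3: "2 \<le> length w \<Longrightarrow> eval_word s4_mul \<nu> w \<noteq> e3"
  by (cases w; cases "tl w") (auto simp: eval_word_def s4_mul_neq_e3)

lemma s4_poly_in_iff:
  assumes "A \<in> {{e2, e4}, {e2, e3}}" and "polynomial P"
  shows "eval_poly s4_add s4_mul \<nu> P \<in> A \<longleftrightarrow> (\<forall>p\<in>set P. eval_word s4_mul \<nu> p \<in> A)"
proof -
  have "s4_add x y \<in> A \<longleftrightarrow> x \<in> A \<and> y \<in> A" for x y
    using assms(1) s4_add_in_e2_e4_iff s4_add_in_e2_e3_iff by blast
  from fold1_in_iff[OF this, of "map (eval_word s4_mul \<nu>) P"] show ?thesis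
    using assms(2) unfolding eval_poly_def polynomial_def by auto
qed

lemma S4_identity_covers_letter:
  assumes eq: "\<And>\<nu>. eval_poly s4_add s4_mul \<nu> u = eval_poly s4_add s4_mul \<nu> v"
    and u: "polynomial u" and v: "polynomial v" and w: "w \<in> set v" and y: "y \<in> set w"
  shows "\<exists>p\<in>set u. set p \<subseteq> set w \<and> y \<in> set p"
proof (rule ccontr)
  assume uncovered: "\<not> (\<exists>p\<in>set u. set p \<subseteq> set w \<and> y \<in> set p)"
  define \<nu> where "\<nu> x = (if x = y then e1 else if x \<in> set w then e4 else e2)" for x
  have "eval_word s4_mul \<nu> p \<in> {e2, e4}" if "p \<in> set u" for p
  proof (cases "set p \<subseteq> set w")
    case True
    with uncovered that have "\<forall>x\<in>set p. \<nu> x = e4" by (auto simp: \<nu>_def)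
    then show ?thesis using s4_word_eq_e4_iff polynomial_word_nonempty[OF u that] by simp
  next
    case False
    then have "\<exists>x\<in>set p. \<nu> x = e2" using y by (auto simp: \<nu>_def)
    then show ?thesis using s4_word_eq_e2_iff polynomial_word_nonempty[OF u that] by simp
  qed
  then have "eval_poly s4_add s4_mul \<nu> u \<in> {e2, e4}"
    using s4_poly_in_iff[of "{e2, e4}", OF _ u] by simp
  then have "eval_poly s4_add s4_mul \<nu> v \<in> {e2, e4}"
    unfolding eq .
  then have "eval_word s4_mul \<nu> w \<in> {e2, e4}"
    using s4_poly_in_iff[of "{e2, e4}", OF _ v] w by simp
  moreover have "w \<noteq> []" using y by auto
  then have "eval_word s4_mul \<nu> w \<noteq> e2" "eval_word s4_mul \<nu> w \<noteq> e4"
    using y by (auto simp: s4_word_eq_e2_iff s4_word_eq_e4_iff \<nu>_def)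
  ultimately show False by simp
qed

lemma S4_identity_covers_length:
  assumes eq: "\<And>\<nu>. eval_poly s4_add s4_mul \<nu> u = eval_poly s4_add s4_mul \<nu> v"
    and u: "polynomial u" and v: "polynomial v" and w: "w \<in> set v" and long: "2 \<le> length w"
  shows "\<exists>p\<in>set u. set p \<subseteq> set w \<and> 2 \<le> length p"
proof (rule ccontr)
  assume uncovered: "\<not> (\<exists>p\<in>set u. set p \<subseteq> set w \<and> 2 \<le> length p)"
  define \<nu> where "\<nu> x = (if x \<in> set w then e3 else e2)" for x
  have "eval_word s4_mul \<nu> p \<in> {e2, e3}" if "p \<in> set u" for p
  proof (cases "set p \<subseteq> set w")
    case True
    with uncovered that have "length p < 2" by auto
    with True polynomial_word_nonempty[OF u that] obtain x where "p = [x]" "x \<in> set w"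
      by (cases p) auto
    then show ?thesis by (simp add: \<nu>_def)
  next
    case False
    then have "\<exists>x\<in>set p. \<nu> x = e2" by (auto simp: \<nu>_def)
    then show ?thesis using s4_word_eq_e2_iff polynomial_word_nonempty[OF u that] by simp
  qed
  then have "eval_poly s4_add s4_mul \<nu> u \<in> {e2, e3}"
    using s4_poly_in_iff[of "{e2, e3}", OF _ u] by simp
  then have "eval_poly s4_add s4_mul \<nu> v \<in> {e2, e3}"
    unfolding eq .
  then have "eval_word s4_mul \<nu> w \<in> {e2, e3}"
    using s4_poly_in_iff[of "{e2, e3}", OF _ v] w by simp
  moreover have "w \<noteq> []" using long by auto
  then have "eval_word s4_mul \<nu> w \<noteq> e2"
    by (auto simp: s4_word_eq_e2_iff \<nu>_def)
  ultimately show False using s4_word_neq_e3[OF long] by simp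
qed

section \<open>Models of the four identities\<close>

lemma satisfiesD: "satisfies ad mu s t \<Longrightarrow> eval ad mu \<nu> s = eval ad mu \<nu> t"
  by (simp add: satisfies_def)

locale S4_basis_model =
  fixes ad mu :: "'a \<Rightarrow> 'a \<Rightarrow> 'a"
  assumes ai_semiring: "ai_semiring ad mu"
    and square_mult_identity: "satisfies ad mu ((V 0 \<odot> V 0) \<odot> V 1) (V 0 \<odot> V 1)"
    and mult_commute_identity: "satisfies ad mu (V 0 \<odot> V 1) (V 1 \<odot> V 0)"
    and square_identity: "satisfies ad mu (V 0 \<odot> V 0) ((V 0 \<odot> V 0) \<oplus> V 0)"
    and product_identity:
      "satisfies ad mu (V 0 \<oplus> (V 1 \<odot> V 2)) ((V 0 \<oplus> (V 1 \<odot> V 2)) \<oplus> ((V 0 \<odot> V 1) \<odot> V 2))"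
begin

lemmas add_assoc = ai_semiringD(1)[OF ai_semiring]
  and add_commute = ai_semiringD(2)[OF ai_semiring]
  and add_idem = ai_semiringD(3)[OF ai_semiring]
  and mult_assoc = ai_semiringD(4)[OF ai_semiring]

lemma mult_commute: "mu x y = mu y x"
  using satisfiesD[OF mult_commute_identity, of "\<lambda>n. if n = 0 then x else y"] by simp

lemma square_mult: "mu (mu x x) y = mu x y"
  using satisfiesD[OF square_mult_identity, of "\<lambda>n. if n = 0 then x else y"] by simp

definition le :: "'a \<Rightarrow> 'a \<Rightarrow> bool" (infix "\<preceq>" 50) where
  "x \<preceq> y \<longleftrightarrow> ad x y = y"

lemma le_square: "x \<preceq> mu x x"
  using satisfiesD[OF square_identity, of "\<lambda>_. x"] by (simp add: le_def add_commute)

lemma product_le: "mu (mu x y) z \<preceq> ad x (mu y z)"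
  using satisfiesD[OF product_identity, of "\<lambda>n. if n = 0 then x else if n = 1 then y else z"]
  by (simp add: le_def add_commute)

lemma add_le_iff: "ad x y \<preceq> z \<longleftrightarrow> x \<preceq> z \<and> y \<preceq> z"
  unfolding le_def by (metis add_assoc add_commute add_idem)

lemma le_trans [trans]: "x \<preceq> y \<Longrightarrow> y \<preceq> z \<Longrightarrow> x \<preceq> z"
  unfolding le_def by (metis add_assoc)

lemma le_antisym: "x \<preceq> y \<Longrightarrow> y \<preceq> x \<Longrightarrow> x = y"
  unfolding le_def by (metis add_commute)

lemma poly_le_iff:
  assumes "polynomial P"
  shows "eval_poly ad mu \<nu> P \<preceq> z \<longleftrightarrow> (\<forall>p\<in>set P. eval_word mu \<nu> p \<preceq> z)"
  using fold1_in_iff[of ad "{x. x \<preceq> z}" "map (eval_word mu \<nu>) P"] assms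
  by (auto simp: eval_poly_def polynomial_def add_le_iff)

lemma word_le_poly: "polynomial P \<Longrightarrow> p \<in> set P \<Longrightarrow> eval_word mu \<nu> p \<preceq> eval_poly ad mu \<nu> P"
  using poly_le_iff[of P \<nu> "eval_poly ad mu \<nu> P"] by (simp add: le_def add_idem)

lemma word_mult_letter:
  assumes "2 \<le> length w" "x \<in> set w"
  shows "mu (eval_word mu \<nu> w) (\<nu> x) = eval_word mu \<nu> w"
proof -
  define R where "R = fold1 mu (remove1 (\<nu> x) (map \<nu> w))"
  have "remove1 (\<nu> x) (map \<nu> w) \<noteq> []"
    using assms by (simp add: length_remove1 flip: length_0_conv)
  then have w: "eval_word mu \<nu> w = mu (\<nu> x) R"
    unfolding eval_word_def R_def using assms(2) by (intro fold1_remove1 mult_assoc mult_commute) auto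
  have "mu (mu (\<nu> x) R) (\<nu> x) = mu (mu (\<nu> x) (\<nu> x)) R"
    by (metis mult_assoc mult_commute)
  then show ?thesis unfolding w by (simp add: square_mult)
qed

lemma word_mult_subword:
  assumes "2 \<le> length a" "b \<noteq> []" "set b \<subseteq> set a"
  shows "mu (eval_word mu \<nu> a) (eval_word mu \<nu> b) = eval_word mu \<nu> a"
  using assms(2,3)
proof (induction b)
  case (Cons x b)
  show ?case
  proof (cases "b = []")
    case False
    have "eval_word mu \<nu> (x # b) = mu (\<nu> x) (eval_word mu \<nu> b)"
      using eval_word_append[OF ai_semiring, of "[x]" b] False by simp
    then have "mu (eval_word mu \<nu> a) (eval_word mu \<nu> (x # b))
        = mu (mu (eval_word mu \<nu> a) (\<nu> x)) (eval_word mu \<nu> b)"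
      by (simp add: mult_assoc)
    then show ?thesis using Cons False word_mult_letter[OF assms(1)] by simp
  qed (use Cons word_mult_letter[OF assms(1)] in simp)
qed simp

lemma eval_word_eq_if_set_eq:
  assumes "2 \<le> length a" "2 \<le> length b" "set a = set b"
  shows "eval_word mu \<nu> a = eval_word mu \<nu> b"
  using word_mult_subword[OF assms(1), of b] word_mult_subword[OF assms(2), of a] assms
  by (metis list.size(3) mult_commute not_numeral_le_zero order_refl)

lemma letter_le_poly:
  assumes u: "polynomial u" and p_in: "p \<in> set u" and p_set: "set p = {x}"
  shows "\<nu> x \<preceq> eval_poly ad mu \<nu> u"
proof (cases "2 \<le> length p")
  case True
  have "eval_word mu \<nu> p = mu (\<nu> x) (\<nu> x)"
    using eval_word_eq_if_set_eq[OF True, of "[x, x]"] eval_word_append[OF ai_semiring, of "[x]" "[x]"]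
      p_set by simp
  then show ?thesis
    using le_square word_le_poly[OF u p_in] le_trans by metis
next
  case False
  with p_set have "p = [x]"
    by (cases p) (auto simp: Suc_le_eq)
  then show ?thesis using word_le_poly[OF u p_in] by simp
qed

lemma append_word_le:
  assumes "2 \<le> length q" "p \<noteq> []" "eval_word mu \<nu> q \<preceq> z" "eval_word mu \<nu> p \<preceq> z"
  shows "eval_word mu \<nu> (q @ p) \<preceq> z"
proof -
  obtain a q' where q: "q = a # q'" "q' \<noteq> []"
    using assms(1) by (cases q) (auto simp: Suc_le_eq)
  define P Q' where "P = eval_word mu \<nu> p" and "Q' = eval_word mu \<nu> q'"
  have q_eq: "eval_word mu \<nu> q = mu (\<nu> a) Q'"
    using eval_word_append[OF ai_semiring, of "[a]" q'] q by (simp add: Q'_def)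
  have "eval_word mu \<nu> (q @ p) = mu (mu P (\<nu> a)) Q'"
    using eval_word_append[OF ai_semiring, of q p] q assms(2) q_eq
    by (simp add: P_def) (metis mult_assoc mult_commute)
  also have "\<dots> \<preceq> ad P (mu (\<nu> a) Q')"
    by (rule product_le)
  also have "\<dots> \<preceq> z"
    using assms(3,4) q_eq by (simp add: add_le_iff P_def)
  finally show ?thesis .
qed

lemma long_word_le_poly:
  assumes u: "polynomial u" and long: "2 \<le> length w"
    and letters: "\<And>y. y \<in> set w \<Longrightarrow> \<exists>p\<in>set u. set p \<subseteq> set w \<and> y \<in> set p"
    and long_word: "\<exists>q\<in>set u. set q \<subseteq> set w \<and> 2 \<le> length q"
  shows "eval_word mu \<nu> w \<preceq> eval_poly ad mu \<nu> u"
proof -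
  define U where "U = eval_poly ad mu \<nu> u"
  have "\<exists>r. 2 \<le> length r \<and> set ys \<subseteq> set r \<and> set r \<subseteq> set w \<and> eval_word mu \<nu> r \<preceq> U"
    if "set ys \<subseteq> set w" for ys
    using that
  proof (induction ys)
    case Nil
    from long_word obtain q where "q \<in> set u" "set q \<subseteq> set w" "2 \<le> length q"
      by blast
    then show ?case using word_le_poly[OF u] unfolding U_def by auto
  next
    case (Cons y ys)
    then obtain r where r: "2 \<le> length r" "set ys \<subseteq> set r" "set r \<subseteq> set w" "eval_word mu \<nu> r \<preceq> U"
      by auto
    obtain p where p: "p \<in> set u" "set p \<subseteq> set w" "y \<in> set p"
      using letters Cons.prems by (meson list.set_intros(1) subsetD)
    have "eval_word mu \<nu> (r @ p) \<preceq> U"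
      using append_word_le[OF r(1) polynomial_word_nonempty[OF u p(1)] r(4)] word_le_poly[OF u p(1)]
      unfolding U_def by blast
    then show ?case using r p by (intro exI[of _ "r @ p"]) auto
  qed
  then obtain r where "2 \<le> length r" "set r = set w" "eval_word mu \<nu> r \<preceq> U"
    by blast
  then show ?thesis
    using eval_word_eq_if_set_eq[OF _ long] unfolding U_def by metis
qed

lemma poly_le_if_S4_identity:
  assumes eq: "\<And>\<nu>. eval_poly s4_add s4_mul \<nu> u = eval_poly s4_add s4_mul \<nu> v"
    and u: "polynomial u" and v: "polynomial v"
  shows "eval_poly ad mu \<nu> v \<preceq> eval_poly ad mu \<nu> u"
  unfolding poly_le_iff[OF v]
proof
  fix w assume w: "w \<in> set v"
  show "eval_word mu \<nu> w \<preceq> eval_poly ad mu \<nu> u"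
  proof (cases "2 \<le> length w")
    case True
    then show ?thesis
      using long_word_le_poly[OF u] S4_identity_covers_letter[OF eq u v w]
        S4_identity_covers_length[OF eq u v w] by blast
  next
    case False
    with polynomial_word_nonempty[OF v w] obtain x where "w = [x]"
      by (cases w) (auto simp: Suc_le_eq)
    with S4_identity_covers_letter[OF eq u v w, of x] obtain p where "p \<in> set u" "set p = {x}"
      by auto
    with \<open>w = [x]\<close> show ?thesis using letter_le_poly[OF u] by simp
  qed
qed

theorem in_V_S4: "in_V_S4 ad mu"
  unfolding in_V_S4_def satisfies_def
proof (intro allI impI)
  fix s t \<nu>
  assume "\<forall>\<nu>. eval s4_add s4_mul \<nu> s = eval s4_add s4_mul \<nu> t"
  then have eq: "eval_poly s4_add s4_mul \<nu> (nf s) = eval_poly s4_add s4_mul \<nu> (nf t)" for \<nu>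
    by (simp add: eval_nf[OF s4_ai_semiring])
  show "eval ad mu \<nu> s = eval ad mu \<nu> t"
    unfolding eval_nf[OF ai_semiring]
    by (intro le_antisym poly_le_if_S4_identity polynomial_nf) (use eq in auto)
qed

end

interpretation S4: S4_basis_model s4_add s4_mul
proof -
  have "s4_mul (s4_mul x x) y = s4_mul x y" "s4_mul x y = s4_mul y x"
    "s4_mul x x = s4_add (s4_mul x x) x"
    "s4_add x (s4_mul y z) = s4_add (s4_add x (s4_mul y z)) (s4_mul (s4_mul x y) z)" for x y z
    by (cases x; cases y; cases z; simp)+
  then show "S4_basis_model s4_add s4_mul"
    by unfold_locales (simp_all add: s4_ai_semiring satisfies_def)
qed

theorem proposition7p4:
  fixes ad mu :: "'a \<Rightarrow> 'a \<Rightarrow> 'a"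
  assumes "ai_semiring ad mu"
  shows "in_V_S4 ad mu \<longleftrightarrow>
    (satisfies ad mu ((V 0 \<odot> V 0) \<odot> V 1) (V 0 \<odot> V 1) \<and>
     satisfies ad mu (V 0 \<odot> V 1) (V 1 \<odot> V 0) \<and>
     satisfies ad mu (V 0 \<odot> V 0) ((V 0 \<odot> V 0) \<oplus> V 0) \<and>
     satisfies ad mu (V 0 \<oplus> (V 1 \<odot> V 2)) ((V 0 \<oplus> (V 1 \<odot> V 2)) \<oplus> ((V 0 \<odot> V 1) \<odot> V 2)))"
  (is "_ \<longleftrightarrow> ?basis")
proof
  assume "in_V_S4 ad mu"
  then show ?basis
    unfolding in_V_S4_def
    using S4.square_mult_identity S4.mult_commute_identity S4.square_identity S4.product_identity
    by blast
next
  assume ?basis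
  with assms interpret S4_basis_model ad mu
    by unfold_locales blast+
  show "in_V_S4 ad mu" by (rule in_V_S4)
qed

end
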